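(* Let $K\subset\mathbb{R}^m$ be a pointed, closed, convex cone with nonempty interior which is finitely generated, let $C\subset\mathbb{R}^m$ be a finite set with $0\notin C$ and $K^*=\operatorname{cone}(\operatorname{conv}(C))$, and let $F:\mathbb{R}^n\to\mathbb{R}^m$ be continuously differentiable. Define $h(x,d)=\max\{\langle JF(x)d,w\rangle : w\in C\}$ and $v(x)=\arg\min_{d}\{h(x,d)+\tfrac12\|d\|^2\}$. Fix $0<\rho<\sigma<1$, $\mu>2$, and $e\in\operatorname{int}(K)$ with $\langle w,e\rangle\le1$ for all $w\in C$. Let $x^0\in\mathbb{R}^n$ and assume: (A1) there is an open set $\Lambda$ containing $\mathcal{L}=\{x: F(x)\preceq_K F(x^0)\}$ such that $\|JF(x)-JF(y)\|\le L\|x-y\|$ for all $x,y\in\Lambda$; (A2) every sequence $\{D_k\}\subset F(\mathcal{L})$ with $D_{k+1}\preceq_K D_k$ for all $k$ admits $D\in\mathbb{R}^m$ with $D\preceq_K D_k$ for all $k$. Let $\{x^k\}$ be an infinite sequence generated as follows: $d^0=v(x^0)$; for $k\ge1$, $d^k=v(x^k)+\beta_k d^{k-1}$ with $$\beta_k=\frac{-h(x^k,v(x^k))\big(|h(x^{k-1},v(x^k))|+h(x^{k-1},v(x^k))\big)}{\max\big\{\mu|h(x^k,d^{k-1})h(x^{k-1},v(x^k))|,\ -\mu h(x^{k-1},v(x^{k-1}))|h(x^{k-1},v(x^k))|\big\}};$$ $x^{k+1}=x^k+\alpha_kd^k$, where $\alpha_k>0$ satisfies the standard Wolfe conditions $$F(x^k+\alpha_kd^k)\preceq_K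 F(x^k)+\rho\alpha_k h(x^k,d^k)e,\qquad h(x^k+\alpha_kd^k,d^k)\ge\sigma h(x^k,d^k).$$ Then $$\sum_{k\ge0}\frac{h^2(x^k,d^k)}{\|d^k\|^2}<\infty.$$
   Context: $u\preceq_K v$ means $v-u\in K$. $K^*$ is the positive polar cone of $K$ and $JF$ the Jacobian of $F$. The sequence is assumed infinite, i.e. $v(x^k)\neq0$ for all $k$ (equivalently no $x^k$ is a $K$-Pareto critical point). *)

theory Defs
  imports "HOL-Analysis.Analysis"
begin

definition cone_le :: "'a::real_vector set \<Rightarrow> 'a \<Rightarrow> 'a \<Rightarrow> bool" where
  "cone_le K u v \<longleftrightarrow> v - u \<in> K"

definition dual_cone :: "'a::real_inner set \<Rightarrow> 'a set" where
  "dual_cone K = {w. \<forall>k\<in>K. 0 \<le> inner w k}"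

definition pointed :: "'a::real_vector set \<Rightarrow> bool" where
  "pointed K \<longleftrightarrow> K \<inter> uminus ` K = {0}"

definition finitely_generated_cone :: "'a::real_vector set \<Rightarrow> bool" where
  "finitely_generated_cone K \<longleftrightarrow> (\<exists>S. finite S \<and> K = cone hull (convex hull S))"

text \<open>h(x,d) = max { <JF(x) d, w> : w \<in> C }, with J x the Jacobian (derivative) of F at x.\<close>
definition hfun :: "('n::euclidean_space \<Rightarrow> ('n \<Rightarrow>\<^sub>L 'm::euclidean_space)) \<Rightarrow> 'm set \<Rightarrow> 'n \<Rightarrow> 'n \<Rightarrow> real" where
  "hfun J C x d = Max ((\<lambda>w. inner (blinfun_apply (J x) d) w) ` C)"

text \<open>v(x) = argmin_d { h(x,d) + 1/2 ||d||^2 } (unique minimizer, strongly convex objective).\<close>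
definition vfun :: "('n::euclidean_space \<Rightarrow> ('n \<Rightarrow>\<^sub>L 'm::euclidean_space)) \<Rightarrow> 'm set \<Rightarrow> 'n \<Rightarrow> 'n" where
  "vfun J C x = (THE d. \<forall>d'. hfun J C x d + (1/2) * (norm d)^2 \<le> hfun J C x d' + (1/2) * (norm d')^2)"

text \<open>The conjugate parameter beta_k, with xk = x^k, xp = x^{k-1}, dp = d^{k-1}.\<close>
definition betak :: "('n::euclidean_space \<Rightarrow> ('n \<Rightarrow>\<^sub>L 'm::euclidean_space)) \<Rightarrow> 'm set \<Rightarrow> real \<Rightarrow> 'n \<Rightarrow> 'n \<Rightarrow> 'n \<Rightarrow> real" where
  "betak J C \<mu> xk xp dp =
     (let vk = vfun J C xk; vp = vfun J C xp; hpv = hfun J C xp vk in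
      (- hfun J C xk vk * (\<bar>hpv\<bar> + hpv)) /
      max (\<mu> * \<bar>hfun J C xk dp * hpv\<bar>) (- \<mu> * hfun J C xp vp * \<bar>hpv\<bar>))"

end

theory Submission
  imports Defs
begin

text \<open>
The direction d^k is a descent direction: the numerator of beta_k vanishes unless
h(x^(k-1), v(x^k)) > 0, and then the first entry of the max in its denominator gives
beta_k h(x^k, d^(k-1)) <= (2/mu) |h(x^k, v(x^k))|, so by sublinearity of h(x^k, .)
h(x^k, d^k) <= (1 - 2/mu) h(x^k, v(x^k)) < 0. Hence the Armijo condition makes F(x^k)
K-decreasing; scalarising it with a generator w in C, which is positive at the interior
point e, and using the lower bound from (A2) gives sum alpha_k |h(x^k, d^k)| < infinity.
The curvature condition and the Lipschitz bound on JF give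
(1 - sigma) |h(x^k, d^k)| <= L max_(w in C) |w| alpha_k |d^k|^2, so each term of the
series is at most a constant times alpha_k |h(x^k, d^k)|.
\<close>

lemma inner_le_hfun: "finite C \<Longrightarrow> w \<in> C \<Longrightarrow> inner (blinfun_apply (J x) d) w \<le> hfun J C x d"
  unfolding hfun_def by (rule Max_ge) auto

lemma hfun_attained:
  assumes "finite C" "C \<noteq> {}"
  obtains w where "w \<in> C" "hfun J C x d = inner (blinfun_apply (J x) d) w"
proof -
  have "hfun J C x d \<in> (\<lambda>w. inner (blinfun_apply (J x) d) w) ` C"
    unfolding hfun_def using assms by (intro Max_in) auto
  then show ?thesis using that by blast
qed

lemma hfun_add_le:
  assumes "finite C" "C \<noteq> {}"
  shows "hfun J C x (a + b) \<le> hfun J C x a + hfun J C x b"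
proof -
  obtain w where w: "w \<in> C" "hfun J C x (a + b) = inner (blinfun_apply (J x) (a + b)) w"
    using hfun_attained[OF assms] .
  then show ?thesis
    using inner_le_hfun[OF assms(1) w(1), of J x a] inner_le_hfun[OF assms(1) w(1), of J x b]
    by (simp add: blinfun.add_right inner_add_left)
qed

lemma hfun_scaleR_le:
  assumes "finite C" "C \<noteq> {}" "0 \<le> t"
  shows "hfun J C x (t *\<^sub>R a) \<le> t * hfun J C x a"
proof -
  obtain w where w: "w \<in> C" "hfun J C x (t *\<^sub>R a) = inner (blinfun_apply (J x) (t *\<^sub>R a)) w"
    using hfun_attained[OF assms(1,2)] .
  then show ?thesis
    using inner_le_hfun[OF assms(1) w(1), of J x a] assms(3)
    by (simp add: blinfun.scaleR_right mult_left_mono)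
qed

lemma hfun_zero: "finite C \<Longrightarrow> C \<noteq> {} \<Longrightarrow> hfun J C x 0 = 0"
  by (metis hfun_attained blinfun.zero_right inner_zero_left)

lemma Max_norm_nonneg: "finite C \<Longrightarrow> C \<noteq> {} \<Longrightarrow> 0 \<le> Max (norm ` C)"
  by (meson Max_ge all_not_in_conv finite_imageI image_eqI norm_ge_zero order_trans)

lemma inner_blinfun_le_Max_norm:
  assumes "finite C" "w \<in> C"
  shows "inner (blinfun_apply A d) w \<le> norm A * Max (norm ` C) * norm d"
proof -
  have "inner (blinfun_apply A d) w \<le> norm (blinfun_apply A d) * norm w"
    by (rule norm_cauchy_schwarz)
  also have "\<dots> \<le> (norm A * norm d) * Max (norm ` C)"
    using assms by (intro mult_mono norm_blinfun Max_ge) auto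
  finally show ?thesis by (simp add: ac_simps)
qed

lemma hfun_le_hfun_direction:
  assumes "finite C" "C \<noteq> {}"
  shows "hfun J C x a \<le> hfun J C x b + norm (J x) * Max (norm ` C) * norm (a - b)"
proof -
  obtain w where w: "w \<in> C" "hfun J C x a = inner (blinfun_apply (J x) a) w"
    using hfun_attained[OF assms] .
  have "inner (blinfun_apply (J x) a) w
      = inner (blinfun_apply (J x) b) w + inner (blinfun_apply (J x) (a - b)) w"
    by (simp add: blinfun.diff_right inner_diff_left)
  then show ?thesis
    using w inner_le_hfun[OF assms(1) w(1), of J x b]
      inner_blinfun_le_Max_norm[OF assms(1) w(1), of "J x" "a - b"]
    by linarith
qed

lemma hfun_le_hfun_point:
  assumes "finite C" "C \<noteq> {}"
  shows "hfun J C y d \<le> hfun J C x d + norm (J y - J x) * Max (norm ` C) * norm d"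
proof -
  obtain w where w: "w \<in> C" "hfun J C y d = inner (blinfun_apply (J y) d) w"
    using hfun_attained[OF assms] .
  have "inner (blinfun_apply (J y) d) w
      = inner (blinfun_apply (J x) d) w + inner (blinfun_apply (J y - J x) d) w"
    by (simp add: blinfun.diff_left inner_diff_left)
  then show ?thesis
    using w inner_le_hfun[OF assms(1) w(1), of J x d]
      inner_blinfun_le_Max_norm[OF assms(1) w(1), of "J y - J x" d]
    by linarith
qed

lemma hfun_lipschitz:
  assumes "finite C" "C \<noteq> {}"
  shows "(norm (J x) * Max (norm ` C))-lipschitz_on UNIV (hfun J C x)"
proof (rule lipschitz_onI)
  show "dist (hfun J C x a) (hfun J C x b) \<le> norm (J x) * Max (norm ` C) * dist a b" for a b
    using hfun_le_hfun_direction[OF assms, of J x a b] hfun_le_hfun_direction[OF assms, of J x b a]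
    by (simp add: dist_real_def dist_norm norm_minus_commute abs_le_iff)
  show "0 \<le> norm (J x) * Max (norm ` C)"
    using Max_norm_nonneg[OF assms] by simp
qed

definition steepest_objective ::
    "('n::euclidean_space \<Rightarrow> ('n \<Rightarrow>\<^sub>L 'm::euclidean_space)) \<Rightarrow> 'm set \<Rightarrow> 'n \<Rightarrow> 'n \<Rightarrow> real" where
  "steepest_objective J C x d = hfun J C x d + (1/2) * (norm d)^2"

lemma steepest_objective_has_min:
  assumes "finite C" "C \<noteq> {}"
  obtains m where "\<And>d. steepest_objective J C x m \<le> steepest_objective J C x d"
proof -
  let ?f = "steepest_objective J C x"
  define M where "M = norm (J x) * Max (norm ` C)"
  have M0: "0 \<le> M"
    unfolding M_def using Max_norm_nonneg[OF assms] by simp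
  have "continuous_on UNIV ?f"
    unfolding steepest_objective_def
    by (intro continuous_intros lipschitz_on_continuous_on[OF hfun_lipschitz[OF assms]])
  then obtain m where m: "m \<in> cball 0 (2 * M)" "\<And>d. d \<in> cball 0 (2 * M) \<Longrightarrow> ?f m \<le> ?f d"
    using continuous_attains_inf[of "cball 0 (2 * M)" ?f] M0 continuous_on_subset by force
  have "?f m \<le> 0"
    using m(2)[of 0] M0 hfun_zero[OF assms, of J x] by (simp add: steepest_objective_def)
  moreover have "0 \<le> ?f d" if "2 * M < norm d" for d
  proof -
    have "- M * norm d \<le> hfun J C x d"
      using hfun_le_hfun_direction[OF assms, of J x 0 d] hfun_zero[OF assms, of J x] by (simp add: M_def)
    moreover have "0 \<le> norm d * ((1/2) * norm d - M)"
      using that M0 by simp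
    ultimately show ?thesis
      unfolding steepest_objective_def by (simp add: power2_eq_square algebra_simps)
  qed
  ultimately have "?f m \<le> ?f d" for d
    using m(2)[of d] by (meson mem_cball_0 not_le order_trans)
  then show ?thesis
    using that by blast
qed

lemma steepest_objective_midpoint_le:
  assumes "finite C" "C \<noteq> {}"
  shows "steepest_objective J C x ((1/2) *\<^sub>R (a + b))
     \<le> (steepest_objective J C x a + steepest_objective J C x b) / 2 - (norm (a - b))^2 / 8"
proof -
  have "hfun J C x ((1/2) *\<^sub>R (a + b)) \<le> (hfun J C x a + hfun J C x b) / 2"
    using hfun_scaleR_le[OF assms, of "1/2" J x "a + b"] hfun_add_le[OF assms, of J x a b] by simp
  moreover have "(norm ((1/2) *\<^sub>R (a + b)))^2 = (norm a)^2 / 2 + (norm b)^2 / 2 - (norm (a - b))^2 / 4"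
    unfolding power2_norm_eq_inner
    by (simp add: inner_add_left inner_add_right inner_diff_left inner_diff_right inner_commute field_simps)
  ultimately show ?thesis
    unfolding steepest_objective_def by (simp add: field_simps)
qed

lemma vfun_minimizes:
  assumes "finite C" "C \<noteq> {}"
  shows "steepest_objective J C x (vfun J C x) \<le> steepest_objective J C x d"
proof -
  let ?f = "steepest_objective J C x"
  obtain m where m: "\<And>d. ?f m \<le> ?f d"
    using steepest_objective_has_min[OF assms, of J x] by blast
  have "d = m" if d: "\<And>d'. ?f d \<le> ?f d'" for d
  proof -
    have "?f ((1/2) *\<^sub>R (d + m)) \<le> ?f m - (norm (d - m))^2 / 8"
      using steepest_objective_midpoint_le[OF assms, of J x d m] d[of m] m[of d] by simp
    then have "(norm (d - m))^2 \<le> 0"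
      using m[of "(1/2) *\<^sub>R (d + m)"] by linarith
    then show ?thesis by simp
  qed
  then have "vfun J C x = m"
    unfolding vfun_def steepest_objective_def[symmetric]
    by (intro the_equality) (use m in auto)
  then show ?thesis using m by simp
qed

lemma hfun_vfun_le:
  assumes "finite C" "C \<noteq> {}"
  shows "hfun J C x (vfun J C x) + (norm (vfun J C x))^2 / 2 \<le> 0"
  using vfun_minimizes[OF assms, of J x 0] hfun_zero[OF assms, of J x]
  by (simp add: steepest_objective_def)

lemma hfun_vfun_neg:
  assumes "finite C" "C \<noteq> {}" "vfun J C x \<noteq> 0"
  shows "hfun J C x (vfun J C x) < 0"
proof -
  have "0 < (norm (vfun J C x))^2"
    using assms(3) by simp
  then show ?thesis
    using hfun_vfun_le[OF assms(1,2), of J x] by linarith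
qed

lemma conjugate_coefficient_bounds:
  fixes a p q r \<mu> :: real
  assumes "a < 0" "r < 0" "0 < \<mu>"
  defines "\<beta> \<equiv> (- a * (\<bar>p\<bar> + p)) / max (\<mu> * \<bar>q * p\<bar>) (- \<mu> * r * \<bar>p\<bar>)"
  shows "0 \<le> \<beta>" and "\<beta> * q \<le> 2 / \<mu> * - a"
proof -
  have "0 \<le> \<beta> \<and> \<beta> * q \<le> 2 / \<mu> * - a"
  proof (cases "p \<le> 0")
    case True
    then show ?thesis
      using assms by (simp add: \<beta>_def divide_nonpos_pos)
  next
    case False
    define den where "den = max (\<mu> * \<bar>q\<bar> * p) (- \<mu> * r * p)"
    have "\<mu> * r * p < 0"
      using False by (intro mult_neg_pos mult_pos_neg assms(2,3)) simp
    then have den_pos: "0 < den"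
      unfolding den_def by (simp add: less_max_iff_disj)
    have \<beta>: "\<beta> = 2 * (- a) * p / den"
      using False by (simp add: \<beta>_def den_def abs_mult ac_simps)
    have \<beta>_nonneg: "0 \<le> \<beta>"
      using False den_pos assms(1) by (simp add: \<beta> divide_nonpos_pos mult_nonpos_nonneg)
    have "\<beta> * \<bar>q\<bar> \<le> 2 / \<mu> * - a"
    proof (cases "q = 0")
      case True
      then show ?thesis using assms by (simp add: divide_nonpos_pos)
    next
      case False
      have q_pos: "0 < \<mu> * \<bar>q\<bar> * p"
        using False \<open>\<not> p \<le> 0\<close> assms(3) by simp
      have "\<beta> * \<bar>q\<bar> = 2 * (- a) * p * \<bar>q\<bar> / den"
        by (simp add: \<beta>)
      also have "\<dots> \<le> 2 * (- a) * p * \<bar>q\<bar> / (\<mu> * \<bar>q\<bar> * p)"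
      proof (rule divide_left_mono)
        show "\<mu> * \<bar>q\<bar> * p \<le> den"
          by (simp add: den_def)
        show "0 \<le> 2 * (- a) * p * \<bar>q\<bar>"
          using \<open>\<not> p \<le> 0\<close> assms(1) by simp (simp add: mult_nonpos_nonneg)
        show "0 < den * (\<mu> * \<bar>q\<bar> * p)"
          using den_pos q_pos by simp
      qed
      also have "\<dots> = 2 / \<mu> * - a"
        using False \<open>\<not> p \<le> 0\<close> assms(3) by (simp add: field_simps)
      finally show ?thesis .
    qed
    moreover have "\<beta> * q \<le> \<beta> * \<bar>q\<bar>"
      using \<beta>_nonneg by (simp add: mult_left_mono)
    ultimately show ?thesis
      using \<beta>_nonneg by linarith
  qed
  then show "0 \<le> \<beta>" and "\<beta> * q \<le> 2 / \<mu> * - a" by auto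
qed

lemma hfun_conjugate_direction_le:
  assumes "finite C" "C \<noteq> {}" "vfun J C xk \<noteq> 0" "vfun J C xp \<noteq> 0" "0 < \<mu>"
  shows "hfun J C xk (vfun J C xk + betak J C \<mu> xk xp dp *\<^sub>R dp)
           \<le> (1 - 2 / \<mu>) * hfun J C xk (vfun J C xk)"
proof -
  let ?a = "hfun J C xk (vfun J C xk)" and ?r = "hfun J C xp (vfun J C xp)"
    and ?p = "hfun J C xp (vfun J C xk)" and ?q = "hfun J C xk dp" and ?\<beta> = "betak J C \<mu> xk xp dp"
  have a: "?a < 0" and r: "?r < 0"
    using hfun_vfun_neg assms by blast+
  have "?\<beta> = (- ?a * (\<bar>?p\<bar> + ?p)) / max (\<mu> * \<bar>?q * ?p\<bar>) (- \<mu> * ?r * \<bar>?p\<bar>)"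
    by (simp add: betak_def Let_def)
  then have \<beta>_bounds: "0 \<le> ?\<beta>" "?\<beta> * ?q \<le> 2 / \<mu> * - ?a"
    using conjugate_coefficient_bounds[OF a r assms(5), of ?p ?q] by simp_all
  have "hfun J C xk (vfun J C xk + ?\<beta> *\<^sub>R dp) \<le> ?a + hfun J C xk (?\<beta> *\<^sub>R dp)"
    by (rule hfun_add_le[OF assms(1,2)])
  also have "hfun J C xk (?\<beta> *\<^sub>R dp) \<le> ?\<beta> * hfun J C xk dp"
    by (rule hfun_scaleR_le[OF assms(1,2) \<beta>_bounds(1)])
  also note \<beta>_bounds(2)
  finally show ?thesis
    by (simp add: algebra_simps)
qed

lemma conjugate_directions_descent:
  assumes "finite C" "C \<noteq> {}" "2 < \<mu>" "\<And>k. vfun J C (x k) \<noteq> 0"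
    and "d 0 = vfun J C (x 0)"
    and "\<And>k. d (Suc k) = vfun J C (x (Suc k)) + betak J C \<mu> (x (Suc k)) (x k) (d k) *\<^sub>R d k"
  shows "hfun J C (x k) (d k) < 0"
proof (cases k)
  case 0
  then show ?thesis
    using hfun_vfun_neg[OF assms(1,2,4)] assms(5) by simp
next
  case (Suc j)
  have "d k = vfun J C (x k) + betak J C \<mu> (x k) (x j) (d j) *\<^sub>R d j"
    using assms(6) Suc by simp
  moreover have "0 < \<mu>"
    using assms(3) by simp
  ultimately have "hfun J C (x k) (d k) \<le> (1 - 2 / \<mu>) * hfun J C (x k) (vfun J C (x k))"
    using hfun_conjugate_direction_le[OF assms(1,2) assms(4)[of k] assms(4)[of j]] by simp
  also have "\<dots> < 0"
    using hfun_vfun_neg[OF assms(1,2,4)] assms(3) by (simp add: mult_pos_neg)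
  finally show ?thesis .
qed

lemma cone_le_trans:
  assumes "convex K" "cone K" "cone_le K u v" "cone_le K v w"
  shows "cone_le K u w"
proof -
  have "(w - v) + (v - u) \<in> K"
    using assms convex_cone[of K] unfolding cone_le_def by blast
  then show ?thesis
    by (simp add: cone_le_def)
qed

lemma cone_le_drop_nonpos_scaleR:
  assumes "convex K" "cone K" "e \<in> K" "t \<le> 0" "cone_le K u (v + t *\<^sub>R e)"
  shows "cone_le K u v"
proof -
  have "(- t) *\<^sub>R e \<in> K"
    using assms(2-4) unfolding cone_def by (metis neg_0_le_iff_le)
  then have "cone_le K (v + t *\<^sub>R e) v"
    by (simp add: cone_le_def)
  then show ?thesis
    using cone_le_trans[OF assms(1,2,5)] by blast
qed

lemma inner_le_of_cone_le:
  assumes "w \<in> dual_cone K" "cone_le K u v"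
  shows "inner w u \<le> inner w v"
proof -
  have "0 \<le> inner w (v - u)"
    using assms unfolding dual_cone_def cone_le_def by blast
  then show ?thesis
    by (simp add: inner_diff_right)
qed

lemma dual_cone_inner_interior_pos:
  assumes "w \<in> dual_cone K" "w \<noteq> 0" "e \<in> interior K"
  shows "0 < inner w e"
proof -
  obtain \<epsilon> where \<epsilon>: "0 < \<epsilon>" "ball e \<epsilon> \<subseteq> K"
    using assms(3) mem_interior by blast
  define u where "u = e - (\<epsilon> / 2 / norm w) *\<^sub>R w"
  have "dist e u = \<epsilon> / 2"
    using \<epsilon>(1) assms(2) by (simp add: u_def dist_norm)
  then have "u \<in> K"
    using \<epsilon> by auto
  then have "0 \<le> inner w u"
    using assms(1) by (simp add: dual_cone_def)
  moreover have "inner w u = inner w e - \<epsilon> / 2 * norm w"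
    using assms(2) by (simp add: u_def inner_diff_right power2_norm_eq_inner[symmetric] power2_eq_square)
  moreover have "0 < \<epsilon> / 2 * norm w"
    using \<epsilon>(1) assms(2) by simp
  ultimately show ?thesis
    by linarith
qed

lemma dual_generator_inner_interior_pos:
  assumes "dual_cone K = cone hull (convex hull C)" "0 \<notin> C" "e \<in> interior K"
  obtains w where "w \<in> C" "w \<in> dual_cone K" "0 < inner w e"
proof -
  have "0 \<in> dual_cone K"
    by (simp add: dual_cone_def)
  then obtain w where "w \<in> C"
    using assms(1) by (metis cone_hull_empty convex_hull_empty empty_iff ex_in_conv)
  moreover have "C \<subseteq> dual_cone K"
    unfolding assms(1) by (meson hull_subset order_trans)
  ultimately show ?thesis
    using that dual_cone_inner_interior_pos assms(2,3) by blast
qed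

lemma armijo_iterates_antimono:
  assumes "convex K" "cone K" "e \<in> K" "\<And>k. s k \<le> 0"
    and "\<And>k. cone_le K (y (Suc k)) (y k + s k *\<^sub>R e)"
  shows "cone_le K (y (Suc k)) (y k)" and "cone_le K (y k) (y 0)"
proof -
  show step: "cone_le K (y (Suc k)) (y k)" for k
    using cone_le_drop_nonpos_scaleR[OF assms(1-4) assms(5)] .
  show "cone_le K (y k) (y 0)"
  proof (induction k)
    case 0
    show ?case
      using assms(2,3) cone_contains_0 by (auto simp: cone_le_def)
  next
    case (Suc k)
    show ?case
      by (rule cone_le_trans[OF assms(1,2) step Suc])
  qed
qed

lemma summable_of_decrease_bounded_below:
  fixes a g :: "nat \<Rightarrow> real"
  assumes "0 < c" "\<And>k. 0 \<le> a k" "\<And>k. g (Suc k) + c * a k \<le> g k" "\<And>k. B \<le> g k"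
  shows "summable a"
proof (rule summableI_nonneg_bounded)
  have telescope: "c * (\<Sum>i<n. a i) \<le> g 0 - g n" for n
  proof (induction n)
    case (Suc n)
    then show ?case
      using assms(3)[of n] by (simp add: distrib_left)
  qed simp
  show "(\<Sum>i<n. a i) \<le> (g 0 - B) / c" for n
    using telescope[of n] assms(1) assms(4)[of n] by (simp add: pos_le_divide_eq mult.commute)
qed (use assms(2) in blast)

lemma armijo_steps_summable:
  assumes "w \<in> dual_cone K" "0 < inner w e" "0 < \<rho>" "\<And>k. t k \<le> 0"
    and "\<And>k. cone_le K (y (Suc k)) (y k + (\<rho> * t k) *\<^sub>R e)"
    and "\<And>k. cone_le K D (y k)"
  shows "summable (\<lambda>k. - t k)"
proof (rule summable_of_decrease_bounded_below)
  show "0 < \<rho> * inner w e"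
    using assms(2,3) by simp
  show "inner w (y (Suc k)) + \<rho> * inner w e * - t k \<le> inner w (y k)" for k
    using inner_le_of_cone_le[OF assms(1,5)] by (simp add: inner_add_right algebra_simps)
  show "inner w D \<le> inner w (y k)" for k
    using inner_le_of_cone_le[OF assms(1,6)] .
qed (use assms(4) in simp)

lemma wolfe_curvature_bound:
  assumes "finite C" "C \<noteq> {}" "hfun J C x d < 0" "\<sigma> < 1" "0 \<le> \<alpha>"
    and "norm (J (x + \<alpha> *\<^sub>R d) - J x) \<le> L * norm (\<alpha> *\<^sub>R d)"
    and "\<sigma> * hfun J C x d \<le> hfun J C (x + \<alpha> *\<^sub>R d) d"
  shows "(hfun J C x d)^2 / (norm d)^2 \<le> L * Max (norm ` C) / (1 - \<sigma>) * - (\<alpha> * hfun J C x d)"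
proof -
  let ?h = "hfun J C x d" and ?W = "Max (norm ` C)"
  have "d \<noteq> 0"
    using assms(3) hfun_zero[OF assms(1,2), of J x] by auto
  have "\<sigma> * ?h \<le> ?h + norm (J (x + \<alpha> *\<^sub>R d) - J x) * ?W * norm d"
    using assms(7) hfun_le_hfun_point[OF assms(1,2), of J "x + \<alpha> *\<^sub>R d" d x] by linarith
  also have "\<dots> \<le> ?h + L * (\<alpha> * norm d) * ?W * norm d"
    using assms(5,6) Max_norm_nonneg[OF assms(1,2)] by (intro add_left_mono mult_right_mono) auto
  finally have "(1 - \<sigma>) * - ?h \<le> L * ?W * \<alpha> * (norm d)^2"
    by (simp add: power2_eq_square algebra_simps)
  from mult_right_mono[OF this, of "- ?h"]
  have "(1 - \<sigma>) * ?h^2 \<le> L * ?W * \<alpha> * (- ?h) * (norm d)^2"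
    using assms(3) by (simp add: power2_eq_square ac_simps)
  then show ?thesis
    using assms(4) \<open>d \<noteq> 0\<close> by (simp add: field_simps)
qed

theorem mainTheorem2:
  fixes K C :: "(real^'m) set"
    and F :: "real^'n \<Rightarrow> real^'m"
    and J :: "real^'n \<Rightarrow> ((real^'n) \<Rightarrow>\<^sub>L (real^'m))"
    and \<rho> \<sigma> \<mu> L :: real
    and e :: "real^'m"
    and x0 :: "real^'n"
    and x d :: "nat \<Rightarrow> real^'n"
    and \<alpha> :: "nat \<Rightarrow> real"
  assumes K_pointed: "pointed K" and K_closed: "closed K" and K_convex: "convex K"
    and K_cone: "cone K" and K_int: "interior K \<noteq> {}"
    and K_fg: "finitely_generated_cone K"
    and C_fin: "finite C" and C_0: "0 \<notin> C"
    and K_dual: "dual_cone K = cone hull (convex hull C)"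
    and F_deriv: "\<And>y. (F has_derivative blinfun_apply (J y)) (at y)"
    and J_cont: "continuous_on UNIV J"
    and params: "0 < \<rho>" "\<rho> < \<sigma>" "\<sigma> < 1" "\<mu> > 2"
    and e_int: "e \<in> interior K" and e_bound: "\<forall>w\<in>C. inner w e \<le> 1"
    and A1: "\<exists>\<Lambda>. open \<Lambda> \<and> {y. cone_le K (F y) (F x0)} \<subseteq> \<Lambda> \<and>
               (\<forall>y\<in>\<Lambda>. \<forall>z\<in>\<Lambda>. norm (J y - J z) \<le> L * norm (y - z))"
    and A2: "\<forall>D :: nat \<Rightarrow> real^'m.
               (\<forall>k. D k \<in> F ` {y. cone_le K (F y) (F x0)}) \<and> (\<forall>k. cone_le K (D (Suc k)) (D k))
               \<longrightarrow> (\<exists>D0. \<forall>k. cone_le K D0 (D k))"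
    and x_0: "x 0 = x0"
    and infinite_seq: "\<forall>k. vfun J C (x k) \<noteq> 0"
    and d_0: "d 0 = vfun J C (x 0)"
    and d_Suc: "\<forall>k. d (Suc k) = vfun J C (x (Suc k)) + betak J C \<mu> (x (Suc k)) (x k) (d k) *\<^sub>R d k"
    and x_Suc: "\<forall>k. x (Suc k) = x k + \<alpha> k *\<^sub>R d k"
    and \<alpha>_pos: "\<forall>k. \<alpha> k > 0"
    and wolfe1: "\<forall>k. cone_le K (F (x k + \<alpha> k *\<^sub>R d k)) (F (x k) + (\<rho> * \<alpha> k * hfun J C (x k) (d k)) *\<^sub>R e)"
    and wolfe2: "\<forall>k. hfun J C (x k + \<alpha> k *\<^sub>R d k) (d k) \<ge> \<sigma> * hfun J C (x k) (d k)"
  shows "summable (\<lambda>k. (hfun J C (x k) (d k))^2 / (norm (d k))^2)"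
proof -
  obtain w where w: "w \<in> C" "w \<in> dual_cone K" "0 < inner w e"
    using dual_generator_inner_interior_pos[OF K_dual C_0 e_int] .
  then have C_ne: "C \<noteq> {}"
    by blast
  have descent: "hfun J C (x k) (d k) < 0" for k
    using conjugate_directions_descent[OF C_fin C_ne params(4)] infinite_seq d_0 d_Suc by blast
  have step_nonpos: "\<alpha> k * hfun J C (x k) (d k) \<le> 0" "\<rho> * (\<alpha> k * hfun J C (x k) (d k)) \<le> 0" for k
    using descent[of k] params(1) \<alpha>_pos by (auto simp: mult_pos_neg less_imp_le)
  have armijo: "cone_le K (F (x (Suc k))) (F (x k) + (\<rho> * (\<alpha> k * hfun J C (x k) (d k))) *\<^sub>R e)" for k
    using wolfe1 x_Suc by (simp add: mult.assoc)
  have e_K: "e \<in> K"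
    using e_int interior_subset by blast
  note F_antimono = armijo_iterates_antimono[where y = "\<lambda>k. F (x k)"
      and s = "\<lambda>k. \<rho> * (\<alpha> k * hfun J C (x k) (d k))", OF K_convex K_cone e_K step_nonpos(2) armijo]
  obtain D0 where D0: "\<And>k. cone_le K D0 (F (x k))"
    using A2[rule_format, of "\<lambda>k. F (x k)"] F_antimono x_0 by blast
  have summable_steps: "summable (\<lambda>k. - (\<alpha> k * hfun J C (x k) (d k)))"
    by (rule armijo_steps_summable[where y = "\<lambda>k. F (x k)",
          OF w(2,3) params(1) step_nonpos(1) armijo D0])
  obtain \<Lambda> where \<Lambda>: "{y. cone_le K (F y) (F x0)} \<subseteq> \<Lambda>"
      "\<And>y z. y \<in> \<Lambda> \<Longrightarrow> z \<in> \<Lambda> \<Longrightarrow> norm (J y - J z) \<le> L * norm (y - z)"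
    using A1 by blast
  have "(hfun J C (x k) (d k))^2 / (norm (d k))^2
          \<le> L * Max (norm ` C) / (1 - \<sigma>) * - (\<alpha> k * hfun J C (x k) (d k))" for k
  proof (rule wolfe_curvature_bound[OF C_fin C_ne descent params(3)])
    show "0 \<le> \<alpha> k"
      using \<alpha>_pos less_imp_le by blast
    show "norm (J (x k + \<alpha> k *\<^sub>R d k) - J (x k)) \<le> L * norm (\<alpha> k *\<^sub>R d k)"
      using \<Lambda> F_antimono(2) x_0 x_Suc
      by (metis add_diff_cancel_left' mem_Collect_eq subsetD)
  qed (use wolfe2 in blast)
  then show ?thesis
    by (intro summable_comparison_test'
        [OF summable_mult[OF summable_steps, of "L * Max (norm ` C) / (1 - \<sigma>)"]]) simp
qed

end
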